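(* Let $K$ be an algebraically closed field of characteristic zero, $\mathcal{K} = K(t)$, $\alpha \in \mathcal{K}$, and integers $M \ge 2$, $N \ge 1$, $d \ge 2$. Then $\alpha$ realizes portrait $(M,N)$ for $f_d(z)=z^d+t$ if and only if $f_d^{M-1}(\alpha)$ realizes portrait $(1,N)$ for $f_d$.
   Context: For $c \in K$, let $f_{d,c}(z) = z^d+c$. A point $x$ has preperiodic portrait $(M,N)$ for a map $\phi$ if $M\ge0$ is minimal with $\phi^M(x)$ periodic and $\phi^M(x)$ has exact period $N$. We say $\beta \in \mathcal{K}$ realizes portrait $(M,N)$ for $f_d$ if there exists $c \in K$ such that the specialization $\beta(c)\in\mathbb{P}^1(K)$ (reduction modulo the place $t=c$) has portrait $(M,N)$ for $f_{d,c}$. *)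

theory Defs
  imports "HOL-Computational_Algebra.Polynomial" "HOL-Computational_Algebra.Fraction_Field"
begin

text \<open>Points of P^1(K): None is the point at infinity, Some z is z in K.\<close>

definition periodic_pt :: "('b \<Rightarrow> 'b) \<Rightarrow> 'b \<Rightarrow> bool" where
  "periodic_pt \<phi> x \<longleftrightarrow> (\<exists>n>0. (\<phi> ^^ n) x = x)"

definition exact_period :: "('b \<Rightarrow> 'b) \<Rightarrow> 'b \<Rightarrow> nat \<Rightarrow> bool" where
  "exact_period \<phi> x N \<longleftrightarrow> N > 0 \<and> (\<phi> ^^ N) x = x \<and> (\<forall>k. 0 < k \<and> k < N \<longrightarrow> (\<phi> ^^ k) x \<noteq> x)"

definition has_portrait :: "('b \<Rightarrow> 'b) \<Rightarrow> 'b \<Rightarrow> nat \<Rightarrow> nat \<Rightarrow> bool" where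
  "has_portrait \<phi> x M N \<longleftrightarrow>
     periodic_pt \<phi> ((\<phi> ^^ M) x) \<and> (\<forall>m<M. \<not> periodic_pt \<phi> ((\<phi> ^^ m) x)) \<and>
     exact_period \<phi> ((\<phi> ^^ M) x) N"

definition fdc :: "nat \<Rightarrow> 'a::field \<Rightarrow> 'a option \<Rightarrow> 'a option" where
  "fdc d c z = (case z of None \<Rightarrow> None | Some w \<Rightarrow> Some (w ^ d + c))"

definition tvar :: "'a::field poly fract" where
  "tvar = Fract [:0, 1:] 1"

definition fd :: "nat \<Rightarrow> 'a::field poly fract \<Rightarrow> 'a poly fract" where
  "fd d z = z ^ d + tvar"

text \<open>Specialization (reduction modulo the place t = c): if \<beta> lies in the local
  ring at c, i.e. \<beta> = p/q with q(c) \<noteq> 0, its value is p(c)/q(c); otherwise infinity.\<close>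
definition specialize :: "'a::field poly fract \<Rightarrow> 'a \<Rightarrow> 'a option" where
  "specialize \<beta> c =
     (if \<exists>p q. q \<noteq> 0 \<and> \<beta> = Fract p q \<and> poly q c \<noteq> 0
      then Some (SOME v. \<exists>p q. q \<noteq> 0 \<and> \<beta> = Fract p q \<and> poly q c \<noteq> 0 \<and> v = poly p c / poly q c)
      else None)"

definition realizes :: "nat \<Rightarrow> 'a::field poly fract \<Rightarrow> nat \<Rightarrow> nat \<Rightarrow> bool" where
  "realizes d \<beta> M N \<longleftrightarrow> (\<exists>c. has_portrait (fdc d c) (specialize \<beta> c) M N)"

end

theory Submission
  imports Defs
begin

text \<open>Once a point is periodic, so are all its forward iterates. Hence, for M \<ge> 1, the
  first periodic iterate of x has index M exactly when the M-th iterate is periodic and the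
  (M-1)-st is not, and only the orbit of the (M-1)-st iterate matters. Specialization at t = c
  intertwines f_d with f_{d,c}, including at the point at infinity, which f_{d,c} fixes; so the
  (M-1)-st iterate of \<alpha> specializes to the (M-1)-st iterate of the specialization of \<alpha>.\<close>

lemma periodic_pt_funpow:
  assumes "periodic_pt \<phi> x"
  shows "periodic_pt \<phi> ((\<phi> ^^ k) x)"
proof -
  from assms obtain n where "n > 0" "(\<phi> ^^ n) x = x"
    unfolding periodic_pt_def by blast
  moreover have "(\<phi> ^^ n) ((\<phi> ^^ k) x) = (\<phi> ^^ k) ((\<phi> ^^ n) x)"
    by (metis comp_apply funpow_add add.commute)
  ultimately show ?thesis
    unfolding periodic_pt_def by auto
qed

lemma not_periodic_below_iff:
  assumes "M \<ge> 1"
  shows "(\<forall>m<M. \<not> periodic_pt \<phi> ((\<phi> ^^ m) x)) \<longleftrightarrow> \<not> periodic_pt \<phi> ((\<phi> ^^ (M - 1)) x)"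
proof
  assume last: "\<not> periodic_pt \<phi> ((\<phi> ^^ (M - 1)) x)"
  show "\<forall>m<M. \<not> periodic_pt \<phi> ((\<phi> ^^ m) x)"
  proof (intro allI impI notI)
    fix m
    assume "m < M" and periodic: "periodic_pt \<phi> ((\<phi> ^^ m) x)"
    have "(\<phi> ^^ (M - 1)) x = (\<phi> ^^ (M - 1 - m)) ((\<phi> ^^ m) x)"
      using \<open>m < M\<close> funpow_add[of "M - 1 - m" m \<phi>] by simp
    with periodic_pt_funpow[OF periodic] last show False
      by simp
  qed
qed (use assms in simp)

lemma has_portrait_funpow_iff:
  assumes "k < M"
  shows "has_portrait \<phi> ((\<phi> ^^ k) x) (M - k) N \<longleftrightarrow> has_portrait \<phi> x M N"
proof -
  have shift: "(\<phi> ^^ j) ((\<phi> ^^ k) x) = (\<phi> ^^ (j + k)) x" for j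
    by (simp add: funpow_add)
  have "(\<forall>m<M - k. \<not> periodic_pt \<phi> ((\<phi> ^^ m) ((\<phi> ^^ k) x))) \<longleftrightarrow>
        (\<forall>m<M. \<not> periodic_pt \<phi> ((\<phi> ^^ m) x))"
    using assms not_periodic_below_iff[of "M - k" \<phi> "(\<phi> ^^ k) x"]
      not_periodic_below_iff[of M \<phi> x]
    by (simp add: shift)
  then show ?thesis
    using assms unfolding has_portrait_def by (simp add: shift)
qed

lemma power_Fract: "Fract p q ^ n = Fract (p ^ n) (q ^ n)"
  by (induction n) (simp_all add: fract_collapse)

lemma specialize_Fract:
  assumes "q \<noteq> 0" and "poly q c \<noteq> 0"
  shows "specialize (Fract p q) c = Some (poly p c / poly q c)"
proof -
  let ?P = "\<lambda>v. \<exists>p' q'. q' \<noteq> 0 \<and> Fract p q = Fract p' q' \<and> poly q' c \<noteq> 0 \<and>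
                      v = poly p' c / poly q' c"
  have "?P (poly p c / poly q c)"
    using assms by blast
  then have "?P (SOME v. ?P v)"
    by (rule someI)
  then obtain p' q' where q': "q' \<noteq> 0" "Fract p q = Fract p' q'" "poly q' c \<noteq> 0"
    and some_eq: "(SOME v. ?P v) = poly p' c / poly q' c"
    by blast
  from q'(1,2) assms(1) have "p * q' = p' * q"
    by (simp add: eq_fract)
  then have "poly p c * poly q' c = poly p' c * poly q c"
    by (metis poly_mult)
  then have "poly p' c / poly q' c = poly p c / poly q c"
    using q'(3) assms(2) by (simp add: field_simps)
  with assms some_eq show ?thesis
    unfolding specialize_def by auto
qed

lemma Fract_nonvanishing_representative:
  fixes p q :: "'a::field poly"
  assumes "q \<noteq> 0"
  shows "\<exists>p' q'. q' \<noteq> 0 \<and> Fract p q = Fract p' q' \<and> (poly p' c \<noteq> 0 \<or> poly q' c \<noteq> 0)"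
  using assms
proof (induction "degree q" arbitrary: p q rule: less_induct)
  case less
  show ?case
  proof (cases "poly p c \<noteq> 0 \<or> poly q c \<noteq> 0")
    case True
    with less.prems show ?thesis by blast
  next
    case False
    then obtain p' q' where p': "p = [:-c, 1:] * p'" and q': "q = [:-c, 1:] * q'"
      by (metis poly_eq_0_iff_dvd dvdE)
    with less.prems have "q' \<noteq> 0" by auto
    then have "degree q' < degree q"
      unfolding q' by (subst degree_mult_eq) auto
    moreover have "Fract p q = Fract p' q'"
      unfolding p' q' by (rule mult_fract_cancel) simp
    ultimately show ?thesis
      using less.hyps \<open>q' \<noteq> 0\<close> by metis
  qed
qed

lemma specialize_eq_None:
  assumes "specialize \<beta> c = None"
  obtains p q where "q \<noteq> 0" "\<beta> = Fract p q" "poly q c = 0" "poly p c \<noteq> 0"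
proof -
  obtain p0 q0 where "\<beta> = Fract p0 q0" "q0 \<noteq> 0"
    by (cases \<beta>) auto
  then obtain p q where "q \<noteq> 0" "\<beta> = Fract p q" "poly p c \<noteq> 0 \<or> poly q c \<noteq> 0"
    using Fract_nonvanishing_representative by metis
  moreover have "poly q c = 0"
    using assms specialize_Fract \<open>q \<noteq> 0\<close> \<open>\<beta> = Fract p q\<close> by fastforce
  ultimately show thesis
    using that by blast
qed

lemma specialize_fd:
  fixes \<beta> :: "'a::field poly fract"
  assumes "d \<ge> 1"
  shows "specialize (fd d \<beta>) c = fdc d c (specialize \<beta> c)"
proof (cases "specialize \<beta> c")
  case None
  then obtain p q where q: "q \<noteq> 0" "\<beta> = Fract p q" "poly q c = 0" and p: "poly p c \<noteq> 0"
    by (rule specialize_eq_None)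
  have "\<not> (\<exists>r s. s \<noteq> 0 \<and> fd d \<beta> = Fract r s \<and> poly s c \<noteq> 0)"
  proof
    assume "\<exists>r s. s \<noteq> 0 \<and> fd d \<beta> = Fract r s \<and> poly s c \<noteq> 0"
    then obtain r s where s: "s \<noteq> 0" "fd d \<beta> = Fract r s" "poly s c \<noteq> 0"
      by blast
    have "Fract (p ^ d) (q ^ d) = Fract r s - Fract [:0, 1:] 1"
      using s(2) unfolding fd_def tvar_def q(2) power_Fract by (simp add: algebra_simps)
    also have "\<dots> = Fract (r - [:0, 1:] * s) s"
      using s(1) by simp
    finally have "p ^ d * s = (r - [:0, 1:] * s) * q ^ d"
      using s(1) q(1) by (simp add: eq_fract)
    then have "poly p c ^ d * poly s c = 0"
      using q(3) assms by (metis poly_mult poly_power mult_zero_right zero_power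
          less_le_trans zero_less_one)
    with p s(3) show False
      by simp
  qed
  then show ?thesis
    using None unfolding specialize_def by (simp add: fdc_def)
next
  case (Some v)
  then obtain p q where q: "q \<noteq> 0" "\<beta> = Fract p q" "poly q c \<noteq> 0"
    unfolding specialize_def by (auto split: if_splits)
  then have v: "v = poly p c / poly q c"
    using Some specialize_Fract by fastforce
  have "fd d \<beta> = Fract (p ^ d + [:0, 1:] * q ^ d) (q ^ d)"
    unfolding fd_def tvar_def q(2) power_Fract using q(1) by simp
  then have "specialize (fd d \<beta>) c = Some ((poly p c ^ d + c * poly q c ^ d) / poly q c ^ d)"
    using specialize_Fract[of "q ^ d" c] q by (simp add: poly_power)
  also have "\<dots> = Some (v ^ d + c)"
    using q(3) by (simp add: v field_simps power_divide)
  finally show ?thesis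
    using Some by (simp add: fdc_def)
qed

lemma specialize_funpow_fd:
  fixes \<alpha> :: "'a::field poly fract"
  assumes "d \<ge> 1"
  shows "specialize ((fd d ^^ k) \<alpha>) c = (fdc d c ^^ k) (specialize \<alpha> c)"
  by (induction k) (simp_all add: specialize_fd[OF assms])

theorem lemma3p3:
  fixes \<alpha> :: "'a::{alg_closed_field, field_char_0} poly fract"
    and M N d :: nat
  assumes "M \<ge> 2" and "N \<ge> 1" and "d \<ge> 2"
  shows "realizes d \<alpha> M N \<longleftrightarrow> realizes d ((fd d ^^ (M - 1)) \<alpha>) 1 N"
proof -
  have "has_portrait (fdc d c) (specialize ((fd d ^^ (M - 1)) \<alpha>) c) 1 N \<longleftrightarrow>
        has_portrait (fdc d c) (specialize \<alpha> c) M N" for c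
    using has_portrait_funpow_iff[of "M - 1" M "fdc d c" "specialize \<alpha> c" N]
      specialize_funpow_fd[of d "M - 1" \<alpha> c] assms
    by simp
  then show ?thesis
    unfolding realizes_def by simp
qed

end
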